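(* Let $P$ and $P_{\rm n}$ be two inverse demand functions, each continuous and strictly decreasing with a zero, each satisfying (A2) with the same $c$ and $\Theta$. Suppose that for all $q'<q$, $P(q)-P_{\rm n}(q)<P(q')-P_{\rm n}(q')$, and that $P_{\rm n}(P^{-1}(\underline\theta))=\underline\theta$. Let $\mathcal D(P)$ (resp. $\mathcal D(P_{\rm n})$) be the set of deterministic undominated mechanisms when the inverse demand function is $P$ (resp. $P_{\rm n}$). Then $\mathcal D(P_{\rm n})\subseteq\mathcal D(P)$.
   Context: Setting (for a given inverse demand function $P$). Let $\Theta=[\underline\theta,\overline\theta]$ with $0<\underline\theta<\overline\theta$. Let $c>0$ and let $P:\mathbb R_+\to\mathbb R_+$ be continuous and strictly decreasing with $P(\overline q)=0$ for some $\overline q>0$. Put $V(q)=\int_0^q P(z)\,dz$ and $\mathrm{TS}(\theta,q)=V(q)-c-\theta q$ for $q>0$, $\mathrm{TS}(\theta,0)=0$. Assume (A2): $\mathrm{TS}(\overline\theta,P^{-1}(\overline\theta))>0$. A mechanism is a triple $M=(r,q,u)$ of functions $r:\Theta\to[0,1]$, $q:\Theta\to\mathbb R_+$, $u:\Theta\to\mathbb R$ with $q(\theta)=0$ if and only if $r(\theta)=0$. It is IC if $u(\theta)\ge u(\theta')+(\theta'-\theta)q(\theta')r(\theta')$ for all $\theta,\theta'\in\Theta$, and IR if $u(\theta)\ge 0$ for all $\theta$. (Known fact: $M$ is IC iff $\theta\mapsto q(\theta)r(\theta)$ is nonincreasing and $u(\theta)=u(\overline\theta)+\int_\theta^{\overline\theta}q(z)r(z)\,dz$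 for all $\theta$; an IC mechanism is IR iff $u(\overline\theta)\ge0$.) A mechanism is deterministic if $r(\theta)\in\{0,1\}$ for all $\theta$. Fix $\alpha\in[0,1)$. The regulator's surplus at $\theta$ is $\mathrm{RS}_\alpha(\theta,M)=r(\theta)\,\mathrm{TS}(\theta,q(\theta))-(1-\alpha)u(\theta)$ (with $V$, $\mathrm{TS}$ computed from the relevant inverse demand function). An IC and IR mechanism $\tilde M$ dominates an IC and IR mechanism $M$ if $\mathrm{RS}_\alpha(\theta,\tilde M)\ge \mathrm{RS}_\alpha(\theta,M)$ for all $\theta\in\Theta$ with strict inequality for some $\theta$; $M$ is undominated if it is IC, IR and not dominated by any IC and IR mechanism. *)

theory Defs
  imports "HOL-Analysis.Analysis"
begin

definition inv_demand :: "(real \<Rightarrow> real) \<Rightarrow> bool" where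
  "inv_demand P \<longleftrightarrow> continuous_on {0..} P \<and> strict_antimono_on {0..} P
     \<and> (\<exists>qbar>0. P qbar = 0)"

definition Pinv :: "(real \<Rightarrow> real) \<Rightarrow> real \<Rightarrow> real" where
  "Pinv P t = (THE q. q \<ge> 0 \<and> P q = t)"

definition V :: "(real \<Rightarrow> real) \<Rightarrow> real \<Rightarrow> real" where
  "V P q = integral {0..q} P"

definition TS :: "(real \<Rightarrow> real) \<Rightarrow> real \<Rightarrow> real \<Rightarrow> real \<Rightarrow> real" where
  "TS P c \<theta> q = (if q > 0 then V P q - c - \<theta> * q else 0)"

definition A2 :: "(real \<Rightarrow> real) \<Rightarrow> real \<Rightarrow> real \<Rightarrow> bool" where
  "A2 P c thi \<longleftrightarrow> (\<exists>q\<ge>0. P q = thi \<and> TS P c thi q > 0)"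

type_synonym mech = "(real \<Rightarrow> real) \<times> (real \<Rightarrow> real) \<times> (real \<Rightarrow> real)"

definition mechanism :: "real set \<Rightarrow> mech \<Rightarrow> bool" where
  "mechanism \<Theta> M = (case M of (r, q, u) \<Rightarrow>
     (\<forall>\<theta>\<in>\<Theta>. 0 \<le> r \<theta> \<and> r \<theta> \<le> 1 \<and> q \<theta> \<ge> 0 \<and> (q \<theta> = 0 \<longleftrightarrow> r \<theta> = 0)))"

definition IC :: "real set \<Rightarrow> mech \<Rightarrow> bool" where
  "IC \<Theta> M = (case M of (r, q, u) \<Rightarrow>
     (\<forall>\<theta>\<in>\<Theta>. \<forall>\<theta>'\<in>\<Theta>. u \<theta> \<ge> u \<theta>' + (\<theta>' - \<theta>) * q \<theta>' * r \<theta>'))"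

definition IR :: "real set \<Rightarrow> mech \<Rightarrow> bool" where
  "IR \<Theta> M = (case M of (r, q, u) \<Rightarrow> (\<forall>\<theta>\<in>\<Theta>. u \<theta> \<ge> 0))"

definition deterministic :: "real set \<Rightarrow> mech \<Rightarrow> bool" where
  "deterministic \<Theta> M = (case M of (r, q, u) \<Rightarrow> (\<forall>\<theta>\<in>\<Theta>. r \<theta> = 0 \<or> r \<theta> = 1))"

definition RS :: "(real \<Rightarrow> real) \<Rightarrow> real \<Rightarrow> real \<Rightarrow> real \<Rightarrow> mech \<Rightarrow> real" where
  "RS P c \<alpha> \<theta> M = (case M of (r, q, u) \<Rightarrow> r \<theta> * TS P c \<theta> (q \<theta>) - (1 - \<alpha>) * u \<theta>)"

definition admissible :: "real set \<Rightarrow> mech \<Rightarrow> bool" where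
  "admissible \<Theta> M \<longleftrightarrow> mechanism \<Theta> M \<and> IC \<Theta> M \<and> IR \<Theta> M"

definition dominates :: "(real \<Rightarrow> real) \<Rightarrow> real \<Rightarrow> real \<Rightarrow> real set \<Rightarrow> mech \<Rightarrow> mech \<Rightarrow> bool" where
  "dominates P c \<alpha> \<Theta> M' M \<longleftrightarrow> admissible \<Theta> M' \<and> admissible \<Theta> M \<and>
     (\<forall>\<theta>\<in>\<Theta>. RS P c \<alpha> \<theta> M' \<ge> RS P c \<alpha> \<theta> M) \<and> (\<exists>\<theta>\<in>\<Theta>. RS P c \<alpha> \<theta> M' > RS P c \<alpha> \<theta> M)"

definition undominated :: "(real \<Rightarrow> real) \<Rightarrow> real \<Rightarrow> real \<Rightarrow> real set \<Rightarrow> mech \<Rightarrow> bool" where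
  "undominated P c \<alpha> \<Theta> M \<longleftrightarrow> admissible \<Theta> M \<and> \<not> (\<exists>M'. dominates P c \<alpha> \<Theta> M' M)"

definition Dset :: "(real \<Rightarrow> real) \<Rightarrow> real \<Rightarrow> real \<Rightarrow> real set \<Rightarrow> mech set" where
  "Dset P c \<alpha> \<Theta> = {M. deterministic \<Theta> M \<and> undominated P c \<alpha> \<Theta> M}"

end

theory Submission
  imports Defs
begin

text \<open>Let \<open>M = (r, q, u)\<close> be deterministic and undominated under \<open>Pn\<close>. Local deviations
  show that \<open>u thi = 0\<close>, that the marginal price \<open>Pn (q t)\<close> of every served type \<open>t\<close> is
  at least \<open>t\<close>, that the surplus left to it covers the fixed cost, and that the lowest
  type receives its efficient quantity \<open>q_lo = P\<^sup>-\<^sup>1 tlo\<close>, where \<open>P - Pn\<close> vanishes.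
  Now let \<open>M'\<close> dominate \<open>M\<close> under \<open>P\<close> and put \<open>H = u' - u\<close>. Since \<open>P - Pn\<close> is decreasing,
  these properties bound the welfare gain of \<open>M'\<close> at a served type \<open>\<theta>\<close> by
  \<open>(P (q \<theta>) - \<theta>) (Q' \<theta> - Q \<theta>)\<close>, where \<open>Q = q r\<close> is the expected quantity. Combined with
  the envelope formula \<open>H' = Q - Q'\<close> this first gives \<open>H \<le> 0\<close> and then a linear
  differential inequality which, as \<open>H thi = 0\<close>, forces \<open>H = 0\<close> by a Gronwall argument.
  So \<open>M'\<close> leaves all utilities unchanged, and the contract it offers at a type where it
  strictly raises welfare under \<open>P\<close> can be transplanted into \<open>M\<close>, possibly randomized,
  yielding a mechanism that dominates \<open>M\<close> under \<open>Pn\<close>.\<close>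

section \<open>Integrals of monotone functions\<close>

lemma antimono_on_integrable:
  fixes f :: "real \<Rightarrow> real"
  assumes "antimono_on {a..b} f"
  shows "f integrable_on {a..b}"
proof -
  have "mono_on {a..b} (\<lambda>x. - f x)"
    using assms by (auto simp: monotone_on_def)
  then show ?thesis
    using integrable_neg[OF integrable_on_mono_on] by fastforce
qed

lemma antimono_on_integral_bounds:
  fixes f :: "real \<Rightarrow> real"
  assumes "antimono_on {a..b} f" and "a \<le> b"
  shows "(b - a) * f b \<le> integral {a..b} f" and "integral {a..b} f \<le> (b - a) * f a"
proof -
  have f: "f integrable_on {a..b}"
    using assms(1) by (rule antimono_on_integrable)
  have "integral {a..b} (\<lambda>_. f b) \<le> integral {a..b} f"
    using f assms by (intro integral_le) (auto simp: monotone_on_def)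
  then show "(b - a) * f b \<le> integral {a..b} f"
    using assms(2) by simp
  have "integral {a..b} f \<le> integral {a..b} (\<lambda>_. f a)"
    using f assms by (intro integral_le) (auto simp: monotone_on_def)
  then show "integral {a..b} f \<le> (b - a) * f a"
    using assms(2) by simp
qed

lemma antimono_on_cap_above:
  fixes Q :: "real \<Rightarrow> real"
  assumes anti: "antimono_on S Q" and "t \<in> S" "h \<le> Q t"
  shows "antimono_on S (\<lambda>y. if t \<le> y then min (Q y) h else Q y)"
proof (rule monotone_onI)
  fix x y assume xy: "x \<in> S" "y \<in> S" "x \<le> y"
  then have "Q y \<le> Q x" "x < t \<Longrightarrow> Q t \<le> Q x"
    using anti \<open>t \<in> S\<close> by (auto simp: monotone_on_def)
  then show "(if t \<le> y then min (Q y) h else Q y) \<le> (if t \<le> x then min (Q x) h else Q x)"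
    using xy \<open>h \<le> Q t\<close> by auto
qed

lemma integral_le_on_open_interval:
  fixes f g :: "real \<Rightarrow> real"
  assumes "f integrable_on {a..b}" and "g integrable_on {a..b}"
    and "\<And>x. a < x \<Longrightarrow> x < b \<Longrightarrow> f x \<le> g x"
  shows "integral {a..b} f \<le> integral {a..b} g"
  using integral_le[of f "{a<..<b}" g] assms
  by (simp add: integral_open_interval_real integrable_on_open_interval_real)

text \<open>Subdividing \<open>{a..b}\<close> into \<open>n\<close> equal pieces bounds \<open>\<bar>E a b\<bar>\<close> by a constant
  over \<open>n\<close>.\<close>

lemma additive_interval_fun_eq_0:
  fixes E :: "real \<Rightarrow> real \<Rightarrow> real" and g :: "real \<Rightarrow> real"
  assumes add: "\<And>x y z. a \<le> x \<Longrightarrow> x \<le> y \<Longrightarrow> y \<le> z \<Longrightarrow> z \<le> b \<Longrightarrow> E x z = E x y + E y z"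
    and bound: "\<And>x y. a \<le> x \<Longrightarrow> x \<le> y \<Longrightarrow> y \<le> b \<Longrightarrow> \<bar>E x y\<bar> \<le> (y - x) * (g x - g y)"
    and "a \<le> b"
  shows "E a b = 0"
proof -
  have partition: "\<bar>E a b\<bar> \<le> (b - a) * (g a - g b) / real n" if "n > 0" for n
  proof -
    define h where "h = (b - a) / real n"
    define x where "x k = a + real k * h" for k
    have h: "0 \<le> h" and xn: "x n = b"
      using that \<open>a \<le> b\<close> by (auto simp: h_def x_def)
    have x_in: "a \<le> x k \<and> x k \<le> b" if "k \<le> n" for k
    proof -
      have "real k * h \<le> real n * h"
        using that h by (intro mult_right_mono) auto
      then show ?thesis
        using h xn by (simp add: x_def)
    qed
    have "\<bar>E a (x k)\<bar> \<le> h * (g a - g (x k))" if "k \<le> n" for k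
      using that
    proof (induction k)
      case 0
      then show ?case
        using bound[of a a] \<open>a \<le> b\<close> by (simp add: x_def)
    next
      case (Suc k)
      have step: "x (Suc k) = x k + h"
        by (simp add: x_def algebra_simps)
      have k: "a \<le> x k" "x (Suc k) \<le> b" "x k \<le> x (Suc k)"
        using x_in[of k] x_in[OF Suc.prems] Suc.prems h step by auto
      have "E a (x (Suc k)) = E a (x k) + E (x k) (x (Suc k))"
        using add k by blast
      moreover have "\<bar>E (x k) (x (Suc k))\<bar> \<le> h * (g (x k) - g (x (Suc k)))"
        using bound[of "x k" "x (Suc k)"] k step by simp
      ultimately show ?case
        using Suc k(1) by (simp add: algebra_simps)
    qed
    from this[of n] show ?thesis
      by (simp add: xn h_def)
  qed
  have "(\<lambda>n. (b - a) * (g a - g b) / real n) \<longlonglongrightarrow> 0"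
    by (rule lim_const_over_n)
  then have "\<bar>E a b\<bar> \<le> 0"
    using partition by (intro LIMSEQ_le_const) (auto intro!: exI[of _ 1])
  then show ?thesis
    by simp
qed

lemma backward_gronwall_eq_0:
  fixes H d :: "real \<Rightarrow> real"
  assumes cont: "continuous_on {a..b} H"
    and nonpos: "\<And>x. x \<in> {a..b} \<Longrightarrow> H x \<le> 0" and "H b = 0"
    and diff: "\<And>s t. a \<le> s \<Longrightarrow> s \<le> t \<Longrightarrow> t \<le> b \<Longrightarrow> H s - H t = integral {s..t} d"
    and d: "d integrable_on {a..b}"
    and bound: "\<And>x. x \<in> {a..b} \<Longrightarrow> k * H x \<le> d x" and "0 < k"
    and x: "x \<in> {a..b}"
  shows "H x = 0"
proof (rule ccontr)
  assume "H x \<noteq> 0"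
  then have "H x < 0"
    using nonpos[OF x] by simp
  define Z where "Z = {y \<in> {x..b}. H y = 0}"
  have "closed Z"
    unfolding Z_def using x
    by (intro continuous_closed_preimage_constant continuous_on_subset[OF cont]) auto
  moreover have "b \<in> Z" "bdd_below Z"
    using x \<open>H b = 0\<close> by (auto simp: Z_def intro: bdd_belowI[of _ x])
  ultimately have "Inf Z \<in> Z"
    using closed_contains_Inf by blast
  define z where "z = Inf Z"
  have z: "x \<le> z" "z \<le> b" "H z = 0"
    using \<open>Inf Z \<in> Z\<close> by (auto simp: Z_def z_def)
  have neg: "H y < 0" if "x \<le> y" "y < z" for y
  proof (rule ccontr)
    assume "\<not> H y < 0"
    moreover have "y \<in> {a..b}"
      using that z x by auto
    ultimately have "y \<in> Z"
      using nonpos[of y] that z by (auto simp: Z_def)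
    then have "z \<le> y"
      unfolding z_def using \<open>bdd_below Z\<close> by (rule cInf_lower)
    then show False
      using that by simp
  qed
  have "x < z"
    using z \<open>H x < 0\<close> by (cases "x = z") auto
  \<comment> \<open>On an interval of length \<open>1 / (2 k)\<close> left of \<open>z\<close> the minimum \<open>-m\<close> of \<open>H\<close> satisfies
     \<open>m \<le> k m / (2 k)\<close>.\<close>
  define w where "w = max x (z - 1 / (2 * k))"
  have w: "x \<le> w" "w < z" "z - w \<le> 1 / (2 * k)"
    using \<open>x < z\<close> \<open>0 < k\<close> by (auto simp: w_def)
  have "continuous_on {w..z} H"
    by (rule continuous_on_subset[OF cont]) (use w x z in auto)
  then obtain s where s: "s \<in> {w..z}" and min: "\<And>y. y \<in> {w..z} \<Longrightarrow> H s \<le> H y"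
    using continuous_attains_inf[of "{w..z}" H] w by auto
  define m where "m = - H s"
  have "0 < m"
    using min[of w] neg[of w] w by (auto simp: m_def)
  have "integral {s..z} (\<lambda>_. - (k * m)) \<le> integral {s..z} d"
  proof (rule integral_le)
    show "d integrable_on {s..z}"
      by (rule integrable_on_subinterval[OF d]) (use s w x z in auto)
    fix y assume "y \<in> {s..z}"
    then have "- m \<le> H y" "y \<in> {a..b}"
      using min[of y] s w x z by (auto simp: m_def)
    then show "- (k * m) \<le> d y"
      using bound[of y] mult_left_mono[of "- m" "H y" k] \<open>0 < k\<close> by simp
  qed (rule integrable_const_ivl)
  then have "m \<le> k * m * (z - s)"
    using diff[of s z] s w x z by (simp add: m_def algebra_simps)
  also have "\<dots> \<le> k * m * (1 / (2 * k))"
    using s w \<open>0 < k\<close> \<open>0 < m\<close> by (intro mult_left_mono) auto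
  also have "\<dots> = m / 2"
    using \<open>0 < k\<close> by simp
  finally show False
    using \<open>0 < m\<close> by simp
qed

section \<open>Mechanisms\<close>

text \<open>Incentive compatibility in terms of the expected quantity \<open>Q = q * r\<close>: type \<open>x\<close>
  reporting \<open>y\<close> obtains \<open>u y + (y - x) * Q y\<close>.\<close>

definition IC_alloc :: "real set \<Rightarrow> (real \<Rightarrow> real) \<Rightarrow> (real \<Rightarrow> real) \<Rightarrow> bool" where
  "IC_alloc S u Q \<longleftrightarrow> (\<forall>x\<in>S. \<forall>y\<in>S. u y + (y - x) * Q y \<le> u x)"

lemma IC_iff_IC_alloc: "IC S (r, q, u) \<longleftrightarrow> IC_alloc S u (\<lambda>x. q x * r x)"
  unfolding IC_def IC_alloc_def by (simp add: mult.assoc)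

lemma IC_alloc_bounds:
  assumes "IC_alloc S u Q" and "x \<in> S" "y \<in> S" "x \<le> y"
  shows "Q y \<le> Q x" and "(y - x) * Q y \<le> u x - u y" and "u x - u y \<le> (y - x) * Q x"
proof -
  have mimic: "u y + (y - x) * Q y \<le> u x" "u x + (x - y) * Q x \<le> u y"
    using assms unfolding IC_alloc_def by auto
  then show "(y - x) * Q y \<le> u x - u y" "u x - u y \<le> (y - x) * Q x"
    by (auto simp: algebra_simps)
  show "Q y \<le> Q x"
  proof (cases "x = y")
    case False
    then have "(y - x) * Q y \<le> (y - x) * Q x"
      using mimic by (auto simp: algebra_simps)
    then show ?thesis
      using False \<open>x \<le> y\<close> by simp
  qed simp
qed

lemma IC_alloc_antimono: "IC_alloc S u Q \<Longrightarrow> antimono_on S Q"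
  using IC_alloc_bounds(1) by (auto intro: monotone_onI)

lemma IC_alloc_integral:
  assumes IC: "IC_alloc S u Q" and "{a..b} \<subseteq> S" "a \<le> b"
  shows "u a - u b = integral {a..b} Q"
proof -
  define E where "E x y = u x - u y - integral {x..y} Q" for x y
  have anti: "antimono_on {x..y} Q" if "a \<le> x" "y \<le> b" for x y
    by (rule monotone_on_subset[OF IC_alloc_antimono[OF IC]]) (use that assms(2) in auto)
  have "E a b = 0"
  proof (rule additive_interval_fun_eq_0[OF _ _ \<open>a \<le> b\<close>])
    fix x y z assume "a \<le> x" "x \<le> y" "y \<le> z" "z \<le> b"
    then have "integral {x..y} Q + integral {y..z} Q = integral {x..z} Q"
      using antimono_on_integrable[OF anti] by (intro Henstock_Kurzweil_Integration.integral_combine) auto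
    then show "E x z = E x y + E y z"
      by (simp add: E_def)
  next
    fix x y assume xy: "a \<le> x" "x \<le> y" "y \<le> b"
    then have "x \<in> S" "y \<in> S"
      using assms(2) by auto
    then show "\<bar>E x y\<bar> \<le> (y - x) * (Q x - Q y)"
      using IC_alloc_bounds[OF IC, of x y] antimono_on_integral_bounds[OF anti, of x y] xy
      by (simp add: E_def abs_le_iff algebra_simps)
  qed
  then show ?thesis
    by (simp add: E_def)
qed

lemma IC_alloc_continuous:
  assumes IC: "IC_alloc {a..b} u Q" and nonneg: "\<And>x. x \<in> {a..b} \<Longrightarrow> 0 \<le> Q x"
  shows "continuous_on {a..b} u"
proof (cases "a \<le> b")
  case True
  have dist: "\<bar>u x - u y\<bar> \<le> Q a * (y - x)" if "x \<in> {a..b}" "y \<in> {a..b}" "x \<le> y" for x y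
  proof -
    have "0 \<le> (y - x) * Q y" "(y - x) * Q x \<le> (y - x) * Q a"
      using that nonneg IC_alloc_bounds(1)[OF IC, of a x] True
      by (auto intro: mult_left_mono)
    then show ?thesis
      using IC_alloc_bounds(2,3)[OF IC that] by (auto simp: abs_le_iff algebra_simps)
  qed
  have "(Q a)-lipschitz_on {a..b} u"
  proof (rule lipschitz_onI)
    fix x y assume "x \<in> {a..b}" "y \<in> {a..b}"
    then show "dist (u x) (u y) \<le> Q a * dist x y"
      using dist[of x y] dist[of y x] unfolding dist_real_def
      by (cases "x \<le> y") (auto simp: abs_minus_commute)
  next
    show "0 \<le> Q a"
      using nonneg True by simp
  qed
  then show ?thesis
    by (rule lipschitz_on_continuous_on)
qed simp

lemma IC_alloc_of_integral:
  fixes u Q :: "real \<Rightarrow> real"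
  assumes anti: "antimono_on {a..b} Q"
    and u: "\<And>x. x \<in> {a..b} \<Longrightarrow> u x = u b + integral {x..b} Q"
  shows "IC_alloc {a..b} u Q"
  unfolding IC_alloc_def
proof (intro ballI)
  fix x y assume xy: "x \<in> {a..b}" "y \<in> {a..b}"
  have split: "integral {x..b} Q = integral {x..y} Q + integral {y..b} Q"
    if "x \<in> {a..b}" "y \<in> {a..b}" "x \<le> y" for x y
  proof -
    have "Q integrable_on {x..b}"
      by (rule antimono_on_integrable, rule monotone_on_subset[OF anti]) (use that in auto)
    then show ?thesis
      using that by (intro Henstock_Kurzweil_Integration.integral_combine[symmetric]) auto
  qed
  have bounds: "(y - x) * Q y \<le> integral {x..y} Q" "integral {x..y} Q \<le> (y - x) * Q x"
    if "x \<in> {a..b}" "y \<in> {a..b}" "x \<le> y" for x y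
    using that anti by (auto intro!: antimono_on_integral_bounds monotone_on_subset[OF anti])
  show "u y + (y - x) * Q y \<le> u x"
  proof (cases "x \<le> y")
    case True
    then show ?thesis
      using u[OF xy(1)] u[OF xy(2)] split[OF xy True] bounds[OF xy True] by simp
  next
    case False
    then show ?thesis
      using u[OF xy(1)] u[OF xy(2)] split[OF xy(2,1)] bounds[OF xy(2,1)]
      by (simp add: algebra_simps)
  qed
qed

lemma admissible_of_integral:
  assumes mech: "mechanism {a..b} (r, q, u)"
    and anti: "antimono_on {a..b} (\<lambda>x. q x * r x)"
    and u: "\<And>x. x \<in> {a..b} \<Longrightarrow> u x = integral {x..b} (\<lambda>z. q z * r z)"
  shows "admissible {a..b} (r, q, u)"
proof -
  have "IC {a..b} (r, q, u)"
    unfolding IC_iff_IC_alloc using u u[of b] by (intro IC_alloc_of_integral[OF anti]) auto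
  moreover have "0 \<le> u x" if "x \<in> {a..b}" for x
  proof -
    have "(\<lambda>z. q z * r z) integrable_on {x..b}"
      by (rule antimono_on_integrable, rule monotone_on_subset[OF anti]) (use that in auto)
    then show ?thesis
      using u[OF that] that mech unfolding mechanism_def by (auto intro!: integral_nonneg)
  qed
  ultimately show ?thesis
    using mech by (auto simp: admissible_def IR_def)
qed

lemma dominates_fun_upd:
  assumes adm: "admissible S (r, q, u)" and "\<theta> \<in> S"
    and "0 \<le> a" "a \<le> 1" "0 \<le> b" "b = 0 \<longleftrightarrow> a = 0"
    and IC: "\<forall>x\<in>S. u \<theta> + (\<theta> - x) * (b * a) \<le> u x"
    and gain: "r \<theta> * TS F c \<theta> (q \<theta>) < a * TS F c \<theta> b"
  shows "dominates F c \<alpha> S (r(\<theta> := a), q(\<theta> := b), u) (r, q, u)"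
proof -
  have "mechanism S (r(\<theta> := a), q(\<theta> := b), u)"
    using adm assms(3-6) by (auto simp: admissible_def mechanism_def)
  moreover have "IC S (r(\<theta> := a), q(\<theta> := b), u)"
    using adm IC unfolding admissible_def IC_iff_IC_alloc IC_alloc_def by auto
  moreover have "IR S (r(\<theta> := a), q(\<theta> := b), u)"
    using adm by (auto simp: admissible_def IR_def)
  ultimately show ?thesis
    using adm gain \<open>\<theta> \<in> S\<close> by (auto simp: dominates_def admissible_def RS_def)
qed

section \<open>Gross and total surplus\<close>

lemma V_0 [simp]: "V f 0 = 0"
  by (simp add: V_def)

lemma V_diff:
  fixes f :: "real \<Rightarrow> real"
  assumes "antimono_on {0..} f" and "0 \<le> x" "x \<le> y"
  shows "V f y - V f x = integral {x..y} f"
proof -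
  have "f integrable_on {0..y}"
    by (rule antimono_on_integrable, rule monotone_on_subset[OF assms(1)]) auto
  then have "integral {0..x} f + integral {x..y} f = integral {0..y} f"
    using assms by (intro Henstock_Kurzweil_Integration.integral_combine) auto
  then show ?thesis
    by (simp add: V_def)
qed

lemma V_diff_bounds:
  fixes f :: "real \<Rightarrow> real"
  assumes "antimono_on {0..} f" and "0 \<le> x" "x \<le> y"
  shows "(y - x) * f y \<le> V f y - V f x" and "V f y - V f x \<le> (y - x) * f x"
proof -
  have "antimono_on {x..y} f"
    by (rule monotone_on_subset[OF assms(1)]) (use assms in auto)
  then show "(y - x) * f y \<le> V f y - V f x" "V f y - V f x \<le> (y - x) * f x"
    using antimono_on_integral_bounds V_diff[OF assms] assms(3) by auto
qed

lemma V_le_tangent: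
  fixes f :: "real \<Rightarrow> real"
  assumes f: "strict_antimono_on {0..} f" and "0 \<le> x" "0 \<le> z"
  shows "V f x \<le> V f z + f z * (x - z)" and "x \<noteq> z \<Longrightarrow> V f x < V f z + f z * (x - z)"
proof -
  have anti: "antimono_on {0..} f"
    using f by (simp add: strict_antimono_iff_antimono)
  have less: "f b < f a" if "0 \<le> a" "a < b" for a b
    using f that by (auto simp: monotone_on_def)
  have strict: "V f x < V f z + f z * (x - z)" if "x \<noteq> z"
  proof -
    define m where "m = (x + z) / 2"
    have bounds: "(b - a) * f b \<le> V f b - V f a" "V f b - V f a \<le> (b - a) * f a"
      if "0 \<le> a" "a \<le> b" for a b
      using V_diff_bounds[OF anti that] by auto
    show ?thesis
    proof (cases "x < z")
      case True
      then have "0 \<le> x" "x < m" "m < z"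
        using assms by (auto simp: m_def)
      then have "(m - x) * f z < (m - x) * f m"
        using less[of m z] by simp
      then show ?thesis
        using bounds[of x m] bounds[of m z] \<open>0 \<le> x\<close> \<open>x < m\<close> \<open>m < z\<close>
        by (simp add: algebra_simps)
    next
      case False
      then have "0 \<le> z" "z < m" "m < x"
        using assms that by (auto simp: m_def)
      then have "(x - m) * f m < (x - m) * f z"
        using less[of z m] by simp
      then show ?thesis
        using bounds[of z m] bounds[of m x] \<open>0 \<le> z\<close> \<open>z < m\<close> \<open>m < x\<close>
        by (simp add: algebra_simps)
    qed
  qed
  then show "V f x \<le> V f z + f z * (x - z)"
    by (cases "x = z") force+
  show "x \<noteq> z \<Longrightarrow> V f x < V f z + f z * (x - z)"
    by (rule strict)
qed

lemma V_ge_linear: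
  fixes f :: "real \<Rightarrow> real"
  assumes "antimono_on {0..} f" and "0 \<le> x"
  shows "x * f x \<le> V f x"
  using V_diff_bounds(1)[OF assms(1) order_refl assms(2)] by simp

lemma V_mono_while_nonneg:
  fixes f :: "real \<Rightarrow> real"
  assumes "antimono_on {0..} f" and "0 \<le> y" "y \<le> z" "0 \<le> f z"
  shows "V f y \<le> V f z"
proof -
  have "0 \<le> (z - y) * f z"
    using assms(3,4) by simp
  then show ?thesis
    using V_diff_bounds(1)[OF assms(1-3)] by linarith
qed

lemma V_mult_le_mult_V:
  fixes f :: "real \<Rightarrow> real"
  assumes f: "antimono_on {0..} f" and "0 \<le> z" "z \<le> y"
  shows "z * V f y \<le> y * V f z"
proof -
  have "z * (V f y - V f z) \<le> z * ((y - z) * f z)"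
    using V_diff_bounds(2)[OF assms] assms by (intro mult_left_mono) auto
  moreover have "(y - z) * (z * f z) \<le> (y - z) * V f z"
    using V_ge_linear[OF f \<open>0 \<le> z\<close>] assms by (intro mult_left_mono) auto
  ultimately show ?thesis
    by (simp add: algebra_simps)
qed

lemma mult_V_le_V:
  fixes f :: "real \<Rightarrow> real"
  assumes f: "antimono_on {0..} f" and "0 \<le> f z" "0 \<le> \<rho>" "\<rho> \<le> 1" "0 \<le> y" "\<rho> * y \<le> z"
  shows "\<rho> * V f y \<le> V f z"
proof -
  have "0 \<le> z"
    using assms(3,5,6) by (meson mult_nonneg_nonneg order_trans)
  have "0 \<le> z * f z"
    using assms(2) \<open>0 \<le> z\<close> by simp
  then have Vz: "0 \<le> V f z"
    using V_ge_linear[OF f \<open>0 \<le> z\<close>] by linarith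
  show ?thesis
  proof (cases "y \<le> z")
    case True
    have "0 \<le> y * f y"
      using monotone_onD[OF f, of y z] True assms by simp
    then have "0 \<le> V f y"
      using V_ge_linear[OF f \<open>0 \<le> y\<close>] by simp
    then have "\<rho> * V f y \<le> V f y"
      using \<open>\<rho> \<le> 1\<close> mult_right_mono[of \<rho> 1 "V f y"] by simp
    also have "\<dots> \<le> V f z"
      using V_mono_while_nonneg[OF f \<open>0 \<le> y\<close> True \<open>0 \<le> f z\<close>] .
    finally show ?thesis .
  next
    case False
    show ?thesis
    proof (cases "z = 0")
      case True
      then have "\<rho> = 0"
        using False assms(3,6) by (simp add: mult_le_0_iff)
      then show ?thesis
        using Vz by simp
    next
      case False
      have "z * (\<rho> * V f y) \<le> \<rho> * (y * V f z)"
        using V_mult_le_mult_V[OF f \<open>0 \<le> z\<close>] \<open>\<not> y \<le> z\<close> \<open>0 \<le> \<rho>\<close>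
          mult_left_mono[of "z * V f y" "y * V f z" \<rho>] by (simp add: algebra_simps)
      also have "\<dots> \<le> z * V f z"
        using mult_right_mono[OF \<open>\<rho> * y \<le> z\<close> Vz] by (simp add: algebra_simps)
      finally show ?thesis
        using False \<open>0 \<le> z\<close> by simp
    qed
  qed
qed

lemma TS_of_pos: "0 < x \<Longrightarrow> TS F c t x = V F x - c - t * x"
  by (simp add: TS_def)

lemma TS_le_at_price:
  fixes F :: "real \<Rightarrow> real"
  assumes F: "strict_antimono_on {0..} F" and "0 < z" "F z = t" "0 < x"
  shows "TS F c t x \<le> TS F c t z" and "x \<noteq> z \<Longrightarrow> TS F c t x < TS F c t z"
  using V_le_tangent[OF F, of x z] assms by (auto simp: TS_def algebra_simps)

lemma TS_less_reduce_quantity: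
  fixes F :: "real \<Rightarrow> real"
  assumes F: "strict_antimono_on {0..} F" and "0 < x" "x < z" "F x < t"
  shows "TS F c t z < TS F c t x"
proof -
  have "(z - x) * F x < (z - x) * t"
    using assms by simp
  then show ?thesis
    using V_le_tangent(1)[OF F, of z x] assms by (simp add: TS_def algebra_simps)
qed

lemma TS_less_raise_quantity:
  fixes F :: "real \<Rightarrow> real"
  assumes F: "strict_antimono_on {0..} F" and "0 < x" "x < z" "t \<le> F z"
  shows "TS F c t x < TS F c t z"
proof -
  have "(z - x) * t \<le> (z - x) * F z"
    using assms by (intro mult_left_mono) auto
  then show ?thesis
    using V_le_tangent(2)[OF F, of x z] assms by (simp add: TS_def algebra_simps)
qed

lemma continuous_on_nonneg_less_left:
  fixes f :: "real \<Rightarrow> real"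
  assumes "continuous_on {0..} f" and "0 < z" "f z < t"
  obtains x where "0 < x" "x < z" "f x < t"
proof -
  have "\<forall>e>0. \<exists>d>0. \<forall>x\<in>{0..}. dist x z < d \<longrightarrow> dist (f x) (f z) < e"
    using assms(1,2) unfolding continuous_on_iff by simp
  then obtain d where d: "0 < d" "\<And>x. 0 \<le> x \<Longrightarrow> dist x z < d \<Longrightarrow> dist (f x) (f z) < t - f z"
    using assms(3) by (meson atLeast_iff diff_gt_0_iff_gt)
  define x where "x = max (z / 2) (z - d / 2)"
  have "0 < x" "x < z" "dist x z < d"
    using d assms by (auto simp: x_def dist_real_def)
  then show ?thesis
    using that d(2)[of x] by (auto simp: dist_real_def)
qed

lemma continuous_on_nonneg_greater_right:
  fixes f :: "real \<Rightarrow> real"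
  assumes "continuous_on {0..} f" and "0 \<le> z" "K < f z"
  obtains b where "z < b" "K < f b"
proof -
  have "\<forall>e>0. \<exists>d>0. \<forall>x\<in>{0..}. dist x z < d \<longrightarrow> dist (f x) (f z) < e"
    using assms(1,2) unfolding continuous_on_iff by simp
  then obtain d where d: "0 < d" "\<And>x. 0 \<le> x \<Longrightarrow> dist x z < d \<Longrightarrow> dist (f x) (f z) < f z - K"
    using assms(3) by (meson atLeast_iff diff_gt_0_iff_gt)
  have "\<bar>f (z + d / 2) - f z\<bar> < f z - K"
    using d assms(2) by (auto simp: dist_real_def)
  then show ?thesis
    using that[of "z + d / 2"] d(1) by auto
qed

text \<open>Offering \<open>b\<close> with probability \<open>z / b\<close> keeps the expected quantity \<open>z\<close>; the gain
  comes from continuity of \<open>F\<close> at \<open>z\<close>.\<close>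

lemma exists_randomization_gain:
  fixes F :: "real \<Rightarrow> real"
  assumes cont: "continuous_on {0..} F" and F: "strict_antimono_on {0..} F"
    and "0 < z" and uncovered: "V F z - c < z * F z"
  obtains b where "z < b" "TS F c t z < z / b * TS F c t b"
proof -
  define K where "K = (V F z - c) / z"
  have "K < F z"
    using assms by (simp add: K_def field_simps)
  then obtain b where b: "z < b" "K < F b"
    using continuous_on_nonneg_greater_right[OF cont, of z K] \<open>0 < z\<close> by auto
  have anti: "antimono_on {0..} F"
    using F by (simp add: strict_antimono_iff_antimono)
  have "(b - z) * (V F z - c) = (b - z) * z * K"
    using \<open>0 < z\<close> by (simp add: K_def)
  also have "\<dots> < z * ((b - z) * F b)"
    using b \<open>0 < z\<close> by simp
  also have "\<dots> \<le> z * (V F b - V F z)"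
    using V_diff_bounds(1)[OF anti, of z b] b \<open>0 < z\<close> by simp
  finally have "b * (V F z - c) < z * (V F b - c)"
    by (simp add: algebra_simps)
  then have "V F z - c < z / b * (V F b - c)"
    using b \<open>0 < z\<close> by (simp add: pos_less_divide_eq mult.commute mult.left_commute)
  moreover have "z / b * TS F c t b = z / b * (V F b - c) - t * z"
    using b \<open>0 < z\<close> by (simp add: TS_def right_diff_distrib)
  ultimately show ?thesis
    using that[OF b(1)] \<open>0 < z\<close> by (simp add: TS_def)
qed

lemma inv_demand_strict_antimono: "inv_demand F \<Longrightarrow> strict_antimono_on {0..} F"
  by (simp add: inv_demand_def)

lemma inv_demand_continuous: "inv_demand F \<Longrightarrow> continuous_on {0..} F"
  by (simp add: inv_demand_def)

lemma inv_demand_less: "inv_demand F \<Longrightarrow> 0 \<le> x \<Longrightarrow> x < y \<Longrightarrow> F y < F x"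
  by (auto simp: inv_demand_def monotone_on_def)

lemma inv_demand_le: "inv_demand F \<Longrightarrow> 0 \<le> x \<Longrightarrow> x \<le> y \<Longrightarrow> F y \<le> F x"
  using inv_demand_less by (metis order_le_less)

lemma Pinv_eqI:
  assumes "inv_demand F" and "0 \<le> z" "F z = t"
  shows "Pinv F t = z"
  unfolding Pinv_def
proof (rule the_equality)
  fix y assume "0 \<le> y \<and> F y = t"
  then show "y = z"
    using inv_demand_less[OF assms(1), of y z] inv_demand_less[OF assms(1), of z y] assms
    by (cases y z rule: linorder_cases) auto
qed (use assms in auto)

lemma inv_demand_attains:
  assumes "inv_demand F" and "0 \<le> t" "t \<le> F 0"
  obtains z where "0 \<le> z" "F z = t"
proof -
  obtain qbar where "0 < qbar" "F qbar = 0"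
    using assms(1) by (auto simp: inv_demand_def)
  moreover have "continuous_on {0..qbar} F"
    using inv_demand_continuous[OF assms(1)] by (rule continuous_on_subset) auto
  ultimately show ?thesis
    using IVT2'[of F qbar t 0] assms that by auto
qed

lemma A2_witness:
  assumes "A2 F c thi"
  obtains qa where "0 < qa" "F qa = thi" "0 < TS F c thi qa"
  using assms by (auto simp: A2_def TS_def split: if_splits)

lemma exists_TS_pos:
  assumes F: "inv_demand F" and "A2 F c thi" "t \<le> thi" "0 < y" "t \<le> F y"
  obtains b where "y \<le> b" "0 < TS F c t b"
proof -
  obtain qa where qa: "0 < qa" "F qa = thi" "0 < TS F c thi qa"
    using A2_witness[OF assms(2)] .
  have "t * qa \<le> thi * qa"
    using qa \<open>t \<le> thi\<close> by (intro mult_right_mono) auto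
  then have "0 < TS F c t qa"
    using qa TS_of_pos[of qa F c t] TS_of_pos[of qa F c thi] by linarith
  moreover have "TS F c t qa < TS F c t y" if "qa < y"
    using TS_less_raise_quantity[OF inv_demand_strict_antimono[OF F]] qa that assms by auto
  ultimately show ?thesis
    using that[of "max y qa"] by (cases "qa < y") (auto simp: max_def)
qed

lemma TS_at_price_pos:
  assumes F: "inv_demand F" and "A2 F c thi" "t \<le> thi" "0 < z" "F z = t"
  shows "0 < TS F c t z"
proof -
  obtain b where "z \<le> b" "0 < TS F c t b"
    using exists_TS_pos[OF assms(1-4)] assms(5) by auto
  then show ?thesis
    using TS_le_at_price(1)[OF inv_demand_strict_antimono[OF F] \<open>0 < z\<close> \<open>F z = t\<close>,
        where x = b and c = c] \<open>0 < z\<close>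
    by simp
qed

section \<open>Undominated deterministic mechanisms\<close>

locale demand_shift =
  fixes P Pn :: "real \<Rightarrow> real" and c \<alpha> tlo thi :: real
  assumes tlo_pos: "0 < tlo" and tlo_less_thi: "tlo < thi" and \<alpha>_less_1: "\<alpha> < 1"
    and P: "inv_demand P" and Pn: "inv_demand Pn"
    and A2_P: "A2 P c thi" and A2_Pn: "A2 Pn c thi"
    and gap_decreasing: "\<And>q q'. 0 \<le> q' \<Longrightarrow> q' < q \<Longrightarrow> P q - Pn q < P q' - Pn q'"
    and Pn_at_Pinv_tlo: "Pn (Pinv P tlo) = tlo"
begin

abbreviation \<Theta> :: "real set" where "\<Theta> \<equiv> {tlo..thi}"

definition \<Delta> :: "real \<Rightarrow> real" where "\<Delta> z = P z - Pn z"

definition q_lo :: real where "q_lo = Pinv P tlo"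

lemma \<Delta>_strict_antimono: "strict_antimono_on {0..} \<Delta>"
  using gap_decreasing by (auto intro!: monotone_onI simp: \<Delta>_def)

lemma \<Delta>_antimono: "antimono_on {0..} \<Delta>"
  using \<Delta>_strict_antimono by (simp add: strict_antimono_iff_antimono)

lemma V_\<Delta>: "0 \<le> x \<Longrightarrow> V \<Delta> x = V P x - V Pn x"
proof -
  have "antimono_on {0..x} F" if "inv_demand F" for F
    using inv_demand_strict_antimono[OF that]
    by (auto simp: strict_antimono_iff_antimono intro: monotone_on_subset)
  then have "P integrable_on {0..x}" "Pn integrable_on {0..x}"
    using P Pn antimono_on_integrable by blast+
  then show ?thesis
    by (simp add: V_def \<Delta>_def[abs_def] integral_diff)
qed

lemma TS_P_eq: "0 < y \<Longrightarrow> TS P c t y = TS Pn c t y + V \<Delta> y"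
  using V_\<Delta>[of y] by (simp add: TS_def)

lemma q_lo: "0 < q_lo" "P q_lo = tlo" "Pn q_lo = tlo"
proof -
  obtain qa where qa: "0 < qa" "P qa = thi"
    using A2_witness[OF A2_P] by blast
  then have "thi \<le> P 0"
    using inv_demand_le[OF P, of 0 qa] by simp
  then obtain z where z: "0 \<le> z" "P z = tlo"
    using inv_demand_attains[OF P, of tlo] tlo_pos tlo_less_thi by auto
  then have "q_lo = z"
    unfolding q_lo_def by (rule Pinv_eqI[OF P])
  then show "P q_lo = tlo" "Pn q_lo = tlo"
    using z Pn_at_Pinv_tlo by (simp_all add: q_lo_def)
  show "0 < q_lo"
    using \<open>q_lo = z\<close> z \<open>thi \<le> P 0\<close> tlo_less_thi by (cases "z = 0") auto
qed

lemma \<Delta>_q_lo: "\<Delta> q_lo = 0"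
  using q_lo by (simp add: \<Delta>_def)

lemma \<Delta>_nonneg: "0 \<le> x \<Longrightarrow> x \<le> q_lo \<Longrightarrow> 0 \<le> \<Delta> x"
  using monotone_onD[OF \<Delta>_antimono, of x q_lo] \<Delta>_q_lo by simp

lemma \<Delta>_pos: "0 \<le> x \<Longrightarrow> x < q_lo \<Longrightarrow> 0 < \<Delta> x"
  using monotone_onD[OF \<Delta>_strict_antimono, of x q_lo] \<Delta>_q_lo by simp

lemma le_q_lo_of_Pn_ge: "0 \<le> x \<Longrightarrow> tlo \<le> Pn x \<Longrightarrow> x \<le> q_lo"
  using inv_demand_less[OF Pn, of q_lo x] q_lo by force

lemma less_q_lo_of_Pn_gt: "0 \<le> x \<Longrightarrow> tlo < Pn x \<Longrightarrow> x < q_lo"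
  using inv_demand_le[OF Pn, of q_lo x] q_lo by force

end

locale undominated_deterministic = demand_shift +
  fixes r q u :: "real \<Rightarrow> real"
  assumes deterministic: "deterministic \<Theta> (r, q, u)"
    and undominated: "undominated Pn c \<alpha> \<Theta> (r, q, u)"
begin

definition Q :: "real \<Rightarrow> real" where "Q x = q x * r x"

lemma admissible: "admissible \<Theta> (r, q, u)"
  using undominated by (simp add: undominated_def)

lemma not_dominated: "\<not> dominates Pn c \<alpha> \<Theta> M (r, q, u)"
  using undominated unfolding undominated_def by blast

lemma deterministic_cases:
  assumes "x \<in> \<Theta>"
  obtains "r x = 0" "q x = 0" "Q x = 0" | "r x = 1" "0 < q x" "Q x = q x"
proof -
  have "mechanism \<Theta> (r, q, u)"
    using admissible by (simp add: admissible_def)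
  then have "r x = 0 \<or> r x = 1" "0 \<le> q x" "q x = 0 \<longleftrightarrow> r x = 0"
    using deterministic assms by (simp_all add: deterministic_def mechanism_def)
  then show ?thesis
    using that by (auto simp: Q_def)
qed

lemma allocated_quantity:
  assumes "x \<in> \<Theta>" and "r x = 1"
  shows "0 < q x" and "Q x = q x"
  by (rule deterministic_cases[OF assms(1)]; use assms(2) in simp)+

lemma unallocated:
  assumes "x \<in> \<Theta>" and "r x \<noteq> 1"
  shows "r x = 0" and "q x = 0" and "Q x = 0"
  by (rule deterministic_cases[OF assms(1)]; use assms(2) in simp)+

lemma Q_nonneg: "x \<in> \<Theta> \<Longrightarrow> 0 \<le> Q x"
  by (cases rule: deterministic_cases) auto

lemma Q_pos_imp: "x \<in> \<Theta> \<Longrightarrow> 0 < Q x \<Longrightarrow> r x = 1"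
  by (cases rule: deterministic_cases) auto

lemma IC_alloc_Q: "IC_alloc \<Theta> u Q"
  using admissible unfolding admissible_def IC_iff_IC_alloc Q_def[abs_def] by simp

lemma Q_antimono: "antimono_on \<Theta> Q"
  using IC_alloc_antimono[OF IC_alloc_Q] .

text \<open>Otherwise lowering \<open>u\<close> by the constant \<open>u thi\<close> would dominate.\<close>

lemma u_thi: "u thi = 0"
proof (rule ccontr)
  assume "u thi \<noteq> 0"
  moreover have "0 \<le> u thi"
    using admissible tlo_less_thi by (simp add: admissible_def IR_def)
  ultimately have pos: "0 < u thi"
    by simp
  define M where "M = (r, q, \<lambda>x. u x - u thi)"
  have "u thi \<le> u x" if "x \<in> \<Theta>" for x
  proof -
    have "0 \<le> (thi - x) * Q thi"
      using Q_nonneg[of thi] that tlo_less_thi by simp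
    then show ?thesis
      using IC_alloc_bounds(2)[OF IC_alloc_Q that, of thi] that tlo_less_thi by simp
  qed
  then have "IR \<Theta> M"
    by (simp add: M_def IR_def)
  moreover have "IC \<Theta> M"
    using IC_alloc_Q by (simp add: M_def IC_iff_IC_alloc IC_alloc_def Q_def)
  ultimately have "admissible \<Theta> M"
    using admissible by (simp add: M_def admissible_def mechanism_def)
  moreover have "RS Pn c \<alpha> x M = RS Pn c \<alpha> x (r, q, u) + (1 - \<alpha>) * u thi" for x
    by (simp add: M_def RS_def algebra_simps)
  moreover have "0 < (1 - \<alpha>) * u thi"
    using pos \<alpha>_less_1 by simp
  moreover have "thi \<in> \<Theta>"
    using tlo_less_thi by simp
  ultimately have "dominates Pn c \<alpha> \<Theta> M (r, q, u)"
    using admissible unfolding dominates_def by (metis less_add_same_cancel1 order_less_imp_le)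
  then show False
    using not_dominated by blast
qed

lemma u_eq_integral: "x \<in> \<Theta> \<Longrightarrow> u x = integral {x..thi} Q"
  using IC_alloc_integral[OF IC_alloc_Q, of x thi] u_thi by auto

lemma Q_integrable: "{a..b} \<subseteq> \<Theta> \<Longrightarrow> Q integrable_on {a..b}"
  by (rule antimono_on_integrable, rule monotone_on_subset[OF Q_antimono])

text \<open>Otherwise capping the quantity of all types \<open>y \<ge> t\<close> slightly below \<open>q t\<close>, at a
  level where the price is still below \<open>t\<close>, and lowering \<open>u\<close> by the envelope formula
  would dominate.\<close>

lemma type_le_Pn_q:
  assumes t: "t \<in> \<Theta>" and "r t = 1"
  shows "t \<le> Pn (q t)"
proof (rule ccontr)
  assume "\<not> t \<le> Pn (q t)"
  note qt = allocated_quantity[OF t \<open>r t = 1\<close>]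
  obtain h where h: "0 < h" "h < q t" "Pn h < t"
    by (rule continuous_on_nonneg_less_left[OF inv_demand_continuous[OF Pn] qt(1)])
      (use \<open>\<not> t \<le> Pn (q t)\<close> in auto)
  define q' where "q' y = (if t \<le> y then min (q y) h else q y)" for y
  define Q' where "Q' y = (if t \<le> y then min (Q y) h else Q y)" for y
  define u' where "u' y = integral {y..thi} Q'" for y
  have Q': "q' y * r y = Q' y" if "y \<in> \<Theta>" for y
    using that h by (cases rule: deterministic_cases) (auto simp: q'_def Q'_def)
  have anti: "antimono_on \<Theta> Q'"
    unfolding Q'_def using antimono_on_cap_above[OF Q_antimono t] h qt by simp
  have "mechanism \<Theta> (r, q', u')"
    unfolding mechanism_def
    using h by (auto elim!: deterministic_cases simp: q'_def)
  moreover have "antimono_on \<Theta> (\<lambda>y. q' y * r y)"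
    using anti Q' by (auto simp: monotone_on_def)
  moreover have "u' y = integral {y..thi} (\<lambda>z. q' z * r z)" if "y \<in> \<Theta>" for y
    unfolding u'_def using Q' that by (intro integral_cong) auto
  ultimately have adm': "admissible \<Theta> (r, q', u')"
    by (rule admissible_of_integral)
  have u'_le: "u' y \<le> u y" if "y \<in> \<Theta>" for y
  proof -
    have "Q' integrable_on {y..thi}"
      by (rule antimono_on_integrable, rule monotone_on_subset[OF anti]) (use that in auto)
    then show ?thesis
      using that Q_integrable[of y thi] u_eq_integral[OF that]
      by (auto simp: u'_def Q'_def intro!: integral_le)
  qed
  have TS_gain: "r y * TS Pn c y (q y) \<le> r y * TS Pn c y (q' y)"
    "y = t \<Longrightarrow> r y * TS Pn c y (q y) < r y * TS Pn c y (q' y)" if "y \<in> \<Theta>" for y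
  proof -
    have less: "TS Pn c y (q y) < TS Pn c y h" if "t \<le> y" "h < q y"
      using TS_less_reduce_quantity[OF inv_demand_strict_antimono[OF Pn] \<open>0 < h\<close> that(2)] h that(1)
      by simp
    show "r y * TS Pn c y (q y) \<le> r y * TS Pn c y (q' y)"
      using \<open>y \<in> \<Theta>\<close> by (cases rule: deterministic_cases)
        (auto simp: q'_def min_def less_imp_le[OF less])
    show "y = t \<Longrightarrow> r y * TS Pn c y (q y) < r y * TS Pn c y (q' y)"
      using less h \<open>r t = 1\<close> by (auto simp: q'_def)
  qed
  have "RS Pn c \<alpha> y (r, q, u) \<le> RS Pn c \<alpha> y (r, q', u')"
    "y = t \<Longrightarrow> RS Pn c \<alpha> y (r, q, u) < RS Pn c \<alpha> y (r, q', u')" if "y \<in> \<Theta>" for y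
  proof -
    have "(1 - \<alpha>) * u' y \<le> (1 - \<alpha>) * u y"
      using u'_le[OF that] \<alpha>_less_1 by (intro mult_left_mono) auto
    then show "RS Pn c \<alpha> y (r, q, u) \<le> RS Pn c \<alpha> y (r, q', u')"
      "y = t \<Longrightarrow> RS Pn c \<alpha> y (r, q, u) < RS Pn c \<alpha> y (r, q', u')"
      using TS_gain(1)[OF that] TS_gain(2)[OF that] by (simp_all add: RS_def)
  qed
  then have "dominates Pn c \<alpha> \<Theta> (r, q', u') (r, q, u)"
    using adm' admissible t unfolding dominates_def by blast
  then show False
    using not_dominated by blast
qed

text \<open>Otherwise offering a larger quantity with a proportionally lower probability to type
  \<open>x\<close> alone would dominate; it leaves the expected quantity, hence \<open>u\<close>, unchanged.\<close>

lemma cost_le_surplus: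
  assumes x: "x \<in> \<Theta>" and "r x = 1"
  shows "c \<le> V Pn (q x) - q x * Pn (q x)"
proof (rule ccontr)
  assume uncovered: "\<not> c \<le> V Pn (q x) - q x * Pn (q x)"
  note qx = allocated_quantity[OF x \<open>r x = 1\<close>]
  obtain b where b: "q x < b" "TS Pn c x (q x) < q x / b * TS Pn c x b"
    by (rule exists_randomization_gain[OF inv_demand_continuous[OF Pn]
          inv_demand_strict_antimono[OF Pn] qx(1)]) (use uncovered in auto)
  have "\<forall>y\<in>\<Theta>. u x + (x - y) * Q x \<le> u y"
    using IC_alloc_Q x unfolding IC_alloc_def by blast
  then have "\<forall>y\<in>\<Theta>. u x + (x - y) * (b * (q x / b)) \<le> u y"
    using qx b(1) by simp
  then have "dominates Pn c \<alpha> \<Theta> (r(x := q x / b), q(x := b), u) (r, q, u)"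
    using qx b \<open>r x = 1\<close> by (intro dominates_fun_upd[OF admissible x]) auto
  then show False
    using not_dominated by blast
qed

lemma Q_less_q_lo:
  assumes x: "x \<in> \<Theta>" and "tlo < x"
  shows "Q x < q_lo"
  using x
proof (cases rule: deterministic_cases)
  case 2
  then show ?thesis
    using type_le_Pn_q[OF x] less_q_lo_of_Pn_gt[of "q x"] \<open>tlo < x\<close> by simp
qed (use q_lo in simp)

text \<open>Otherwise giving the lowest type the efficient quantity \<open>q_lo\<close> would dominate; this
  keeps incentive compatibility because \<open>Q < q_lo\<close> above \<open>tlo\<close>.\<close>

lemma lowest_type_efficient: "r tlo = 1 \<and> q tlo = q_lo"
proof (rule ccontr)
  assume not_efficient: "\<not> ?thesis"
  have tlo: "tlo \<in> \<Theta>"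
    using tlo_less_thi by simp
  have "u tlo + (tlo - x) * (q_lo * 1) \<le> u x" if x: "x \<in> \<Theta>" for x
  proof -
    have "integral {tlo..x} Q \<le> integral {tlo..x} (\<lambda>_. q_lo)"
      using x Q_less_q_lo Q_integrable[of tlo x]
      by (intro integral_le_on_open_interval) (auto simp: less_imp_le)
    then show ?thesis
      using IC_alloc_integral[OF IC_alloc_Q, of tlo x] x by (simp add: algebra_simps)
  qed
  moreover have "r tlo * TS Pn c tlo (q tlo) < 1 * TS Pn c tlo q_lo"
    using tlo
  proof (cases rule: deterministic_cases)
    case 1
    then show ?thesis
      using TS_at_price_pos[OF Pn A2_Pn less_imp_le[OF tlo_less_thi] q_lo(1,3)] by simp
  next
    case 2
    then show ?thesis
      using TS_le_at_price(2)[OF inv_demand_strict_antimono[OF Pn] q_lo(1,3)] not_efficient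
      by simp
  qed
  ultimately have "dominates Pn c \<alpha> \<Theta> (r(tlo := 1), q(tlo := q_lo), u) (r, q, u)"
    using q_lo(1) by (intro dominates_fun_upd[OF admissible tlo]) auto
  then show False
    using not_dominated by blast
qed

lemma cost_le_surplus_P:
  assumes x: "x \<in> \<Theta>" and "r x = 1"
  shows "c \<le> V P (q x) - q x * P (q x)"
proof -
  have "0 < q x"
    using allocated_quantity[OF assms] by simp
  then have "q x * \<Delta> (q x) \<le> V P (q x) - V Pn (q x)"
    using V_ge_linear[OF \<Delta>_antimono, of "q x"] V_\<Delta>[of "q x"] by simp
  then show ?thesis
    using cost_le_surplus[OF assms] by (simp add: \<Delta>_def algebra_simps)
qed

lemma \<Delta>_q_le_margin:
  assumes x: "x \<in> \<Theta>" and "r x = 1"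
  shows "\<Delta> (q x) \<le> P (q x) - x" and "0 \<le> \<Delta> (q x)"
proof -
  have "0 < q x" "x \<le> Pn (q x)"
    using allocated_quantity[OF assms] type_le_Pn_q[OF assms] by auto
  moreover have "tlo \<le> x"
    using x by simp
  ultimately show "\<Delta> (q x) \<le> P (q x) - x" "0 \<le> \<Delta> (q x)"
    using le_q_lo_of_Pn_ge[of "q x"] \<Delta>_nonneg[of "q x"] by (auto simp: \<Delta>_def)
qed

end

section \<open>No dominating mechanism under \<open>P\<close>\<close>

locale dominated_under_P = undominated_deterministic +
  fixes r' q' u' :: "real \<Rightarrow> real"
  assumes dominates_P: "dominates P c \<alpha> \<Theta> (r', q', u') (r, q, u)"
begin

definition Q' :: "real \<Rightarrow> real" where "Q' x = q' x * r' x"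

definition H :: "real \<Rightarrow> real" where "H x = u' x - u x"

definition W :: "real \<Rightarrow> real" where "W x = r x * TS P c x (q x)"

definition W' :: "real \<Rightarrow> real" where "W' x = r' x * TS P c x (q' x)"

lemma admissible': "admissible \<Theta> (r', q', u')"
  using dominates_P by (simp add: dominates_def)

lemma mechanism':
  assumes "x \<in> \<Theta>"
  shows "0 \<le> r' x" "r' x \<le> 1" "0 \<le> q' x" "q' x = 0 \<longleftrightarrow> r' x = 0"
  using admissible' assms by (auto simp: admissible_def mechanism_def)

lemma Q'_nonneg: "x \<in> \<Theta> \<Longrightarrow> 0 \<le> Q' x"
  using mechanism' by (simp add: Q'_def)

lemma IC_alloc_Q': "IC_alloc \<Theta> u' Q'"
  using admissible' unfolding admissible_def IC_iff_IC_alloc Q'_def[abs_def] by simp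

lemma Q'_integrable: "{a..b} \<subseteq> \<Theta> \<Longrightarrow> Q' integrable_on {a..b}"
  by (rule antimono_on_integrable, rule monotone_on_subset[OF IC_alloc_antimono[OF IC_alloc_Q']])

lemma welfare_gain: "x \<in> \<Theta> \<Longrightarrow> (1 - \<alpha>) * H x \<le> W' x - W x"
  using dominates_P by (auto simp: dominates_def RS_def W_def W'_def H_def algebra_simps)

lemma strict_welfare_gain:
  obtains t where "t \<in> \<Theta>" "W t - (1 - \<alpha>) * u t < W' t - (1 - \<alpha>) * u' t"
  using dominates_P by (auto simp: dominates_def RS_def W_def W'_def)

lemma H_diff: "{a..b} \<subseteq> \<Theta> \<Longrightarrow> a \<le> b \<Longrightarrow> H a - H b = integral {a..b} (\<lambda>z. Q' z - Q z)"
  using IC_alloc_integral[OF IC_alloc_Q', of a b] IC_alloc_integral[OF IC_alloc_Q, of a b]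
    Q'_integrable Q_integrable
  by (simp add: H_def integral_diff)

lemma H_continuous: "continuous_on \<Theta> H"
  using IC_alloc_continuous[OF IC_alloc_Q' Q'_nonneg] IC_alloc_continuous[OF IC_alloc_Q Q_nonneg]
  unfolding H_def[abs_def] by (intro continuous_intros)

text \<open>Concavity of \<open>V P\<close>, together with \<open>cost_le_surplus_P\<close> to handle the probability
  \<open>r' x\<close>.\<close>

lemma welfare_gain_le_linear:
  assumes x: "x \<in> \<Theta>" and "r x = 1"
  shows "W' x - W x \<le> (P (q x) - x) * (Q' x - Q x)"
proof -
  define z where "z = q x"
  have z: "0 < z" "Q x = z" "q x = z"
    using allocated_quantity[OF assms] by (auto simp: z_def)
  have cost: "c \<le> V P z - z * P z"
    using cost_le_surplus_P[OF assms] by (simp add: z_def)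
  have W: "W x = V P z - c - x * z"
    using z \<open>r x = 1\<close> by (simp add: W_def TS_def)
  show ?thesis
  proof (cases "r' x = 0")
    case True
    then have "W' x = 0" "Q' x = 0"
      by (simp_all add: W'_def Q'_def)
    moreover have "(P z - x) * (0 - z) = x * z - z * P z"
      by (simp add: algebra_simps)
    ultimately show ?thesis
      using cost W z by simp
  next
    case False
    define \<rho> y where "\<rho> = r' x" and "y = q' x"
    have \<rho>: "0 < \<rho>" "\<rho> \<le> 1" and "0 < y"
      using mechanism'[OF x] False by (auto simp: \<rho>_def y_def)
    have tangent: "\<rho> * V P y \<le> \<rho> * (V P z + P z * (y - z))"
      using V_le_tangent(1)[OF inv_demand_strict_antimono[OF P], of y z] \<open>0 < y\<close> z \<rho>
      by (intro mult_left_mono) auto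
    have slack: "0 \<le> (1 - \<rho>) * (V P z - c - z * P z)"
      using cost \<rho> by (intro mult_nonneg_nonneg) auto
    have "W' x = \<rho> * (V P y - c - x * y)" "Q' x = y * \<rho>"
      using \<open>0 < y\<close> by (simp_all add: W'_def Q'_def TS_def \<rho>_def y_def)
    then have "W' x - W x - (P z - x) * (Q' x - Q x)
        = (\<rho> * V P y - \<rho> * (V P z + P z * (y - z))) - (1 - \<rho>) * (V P z - c - z * P z)"
      unfolding W z(2) by (simp add: algebra_simps)
    then show ?thesis
      unfolding \<open>q x = z\<close> using tangent slack by linarith
  qed
qed

lemma W'_le_W_tlo: "W' tlo \<le> W tlo"
proof -
  have tlo: "tlo \<in> \<Theta>"
    using tlo_less_thi by simp
  have W: "W tlo = TS P c tlo q_lo" and pos: "0 < TS P c tlo q_lo"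
    using lowest_type_efficient TS_at_price_pos[OF P A2_P less_imp_le[OF tlo_less_thi] q_lo(1,2)]
    by (simp_all add: W_def)
  show ?thesis
  proof (cases "r' tlo = 0")
    case False
    then have "0 < q' tlo"
      using mechanism'[OF tlo] by auto
    then have "r' tlo * TS P c tlo (q' tlo) \<le> r' tlo * TS P c tlo q_lo"
      using TS_le_at_price(1)[OF inv_demand_strict_antimono[OF P] q_lo(1,2)] mechanism'[OF tlo]
      by (intro mult_left_mono) auto
    also have "\<dots> \<le> TS P c tlo q_lo"
      using mult_right_mono[of "r' tlo" 1 "TS P c tlo q_lo"] mechanism'[OF tlo] pos by simp
    finally show ?thesis
      by (simp add: W W'_def)
  qed (use pos in \<open>simp add: W W'_def\<close>)
qed

lemma H_tlo_nonpos: "H tlo \<le> 0"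
proof -
  have "(1 - \<alpha>) * H tlo \<le> 0"
    using welfare_gain[of tlo] W'_le_W_tlo tlo_less_thi by simp
  then show ?thesis
    using \<alpha>_less_1 by (simp add: mult_le_0_iff)
qed

lemma Q_le_Q'_of_H_pos:
  assumes z: "z \<in> \<Theta>" and "0 < H z"
  shows "Q z \<le> Q' z"
  using z
proof (cases rule: deterministic_cases)
  case 2
  have "0 < (1 - \<alpha>) * H z"
    using \<open>0 < H z\<close> \<alpha>_less_1 by simp
  then have "0 < (P (q z) - z) * (Q' z - Q z)"
    using welfare_gain[OF z] welfare_gain_le_linear[OF z \<open>r z = 1\<close>] by linarith
  moreover have "0 \<le> P (q z) - z"
    using \<Delta>_q_le_margin[OF z \<open>r z = 1\<close>] by linarith
  ultimately show ?thesis
    by (simp add: zero_less_mult_iff)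
qed (use Q'_nonneg[OF z] in simp)

text \<open>After the last point \<open>s \<le> x\<close> with \<open>H s \<le> 0\<close>, positivity of \<open>H\<close> forces
  \<open>Q \<le> Q'\<close>, so \<open>H\<close> cannot increase there.\<close>

lemma H_nonpos:
  assumes x: "x \<in> \<Theta>"
  shows "H x \<le> 0"
proof (rule ccontr)
  assume "\<not> H x \<le> 0"
  define S where "S = {s \<in> {tlo..x}. H s \<le> 0}"
  have "closed S"
    unfolding S_def using x
    by (intro continuous_closed_preimage_constant continuous_on_closed_Collect_le
        continuous_on_subset[OF H_continuous] continuous_on_const) auto
  moreover have "tlo \<in> S" "bdd_above S"
    using H_tlo_nonpos x by (auto simp: S_def intro: bdd_aboveI[of _ x])
  ultimately have "Sup S \<in> S"
    using closed_contains_Sup by blast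
  define s where "s = Sup S"
  have s: "tlo \<le> s" "s \<le> x" "H s \<le> 0"
    using \<open>Sup S \<in> S\<close> by (auto simp: S_def s_def)
  have pos: "0 < H y" if "s < y" "y \<le> x" for y
  proof (rule ccontr)
    assume "\<not> 0 < H y"
    then have "y \<in> S"
      using that s by (auto simp: S_def)
    then have "y \<le> s"
      unfolding s_def using \<open>bdd_above S\<close> by (rule cSup_upper)
    then show False
      using that by simp
  qed
  have "integral {s..x} (\<lambda>_. 0) \<le> integral {s..x} (\<lambda>z. Q' z - Q z)"
    using x s Q_le_Q'_of_H_pos pos Q'_integrable[of s x] Q_integrable[of s x]
    by (intro integral_le_on_open_interval integrable_diff) auto
  then show False
    using H_diff[of s x] s x \<open>\<not> H x \<le> 0\<close> by simp
qed

lemma H_thi: "H thi = 0"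
proof -
  have "0 \<le> u' thi"
    using admissible' tlo_less_thi by (simp add: admissible_def IR_def)
  then show ?thesis
    using H_nonpos[of thi] u_thi tlo_less_thi by (simp add: H_def)
qed

lemma uniform_margin:
  assumes x: "x \<in> \<Theta>" and "tlo < x"
  obtains g where "0 < g" "\<And>z. z \<in> {x..thi} \<Longrightarrow> r z = 1 \<Longrightarrow> g \<le> P (q z) - z"
proof (cases "r x = 1")
  case True
  note qx = allocated_quantity[OF x True]
  have "0 < \<Delta> (q x)"
    using Q_less_q_lo[OF assms] qx \<Delta>_pos by simp
  moreover have "\<Delta> (q x) \<le> P (q z) - z" if z: "z \<in> {x..thi}" "r z = 1" for z
  proof -
    have "z \<in> \<Theta>"
      using x z by auto
    note qz = allocated_quantity[OF this \<open>r z = 1\<close>]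
    have "q z \<le> q x"
      using monotone_onD[OF Q_antimono x \<open>z \<in> \<Theta>\<close>] z qx qz by simp
    then have "\<Delta> (q x) \<le> \<Delta> (q z)"
      using monotone_onD[OF \<Delta>_antimono] qz by simp
    then show ?thesis
      using \<Delta>_q_le_margin(1)[OF \<open>z \<in> \<Theta>\<close> \<open>r z = 1\<close>] by simp
  qed
  ultimately show ?thesis
    using that by blast
next
  case False
  have "r z \<noteq> 1" if "z \<in> {x..thi}" for z
  proof
    assume "r z = 1"
    moreover have "z \<in> \<Theta>"
      using x that by auto
    ultimately have "0 < Q z"
      using allocated_quantity by simp
    moreover have "Q z \<le> Q x"
      using monotone_onD[OF Q_antimono x \<open>z \<in> \<Theta>\<close>] that by simp
    ultimately show False
      using unallocated(3)[OF x False] by simp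
  qed
  then show ?thesis
    using that[of 1] by auto
qed

text \<open>Where \<open>H < 0\<close>, the welfare comparison forces \<open>Q' - Q \<ge> (1 - \<alpha>) H / g\<close>, a linear
  differential inequality for \<open>H\<close> with \<open>H thi = 0\<close>.\<close>

lemma H_eq_0_above_tlo:
  assumes x: "x \<in> \<Theta>" and "tlo < x"
  shows "H x = 0"
proof -
  obtain g where g: "0 < g" "\<And>z. z \<in> {x..thi} \<Longrightarrow> r z = 1 \<Longrightarrow> g \<le> P (q z) - z"
    using uniform_margin[OF assms] by blast
  have bound: "(1 - \<alpha>) / g * H z \<le> Q' z - Q z" if z: "z \<in> {x..thi}" for z
  proof -
    have zT: "z \<in> \<Theta>"
      using x z by auto
    have "(1 - \<alpha>) * H z \<le> 0"
      using H_nonpos[OF zT] \<alpha>_less_1 by (simp add: mult_nonneg_nonpos)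
    then have "(1 - \<alpha>) / g * H z \<le> 0"
      using g(1) by (simp add: divide_nonpos_pos)
    show ?thesis
      using zT
    proof (cases rule: deterministic_cases)
      case 2
      show ?thesis
      proof (cases "0 \<le> Q' z - Q z")
        case False
        have "(1 - \<alpha>) * H z \<le> (P (q z) - z) * (Q' z - Q z)"
          using welfare_gain[OF zT] welfare_gain_le_linear[OF zT \<open>r z = 1\<close>] by linarith
        also have "\<dots> \<le> g * (Q' z - Q z)"
          using g(2)[OF z \<open>r z = 1\<close>] False by (intro mult_right_mono_neg) auto
        finally show ?thesis
          using g(1) by (simp add: field_simps)
      qed (use \<open>(1 - \<alpha>) / g * H z \<le> 0\<close> in linarith)
    qed (use \<open>(1 - \<alpha>) / g * H z \<le> 0\<close> Q'_nonneg[OF zT] in simp)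
  qed
  have cont: "continuous_on {x..thi} H"
    by (rule continuous_on_subset[OF H_continuous]) (use x in auto)
  have integrable: "(\<lambda>z. Q' z - Q z) integrable_on {x..thi}"
    using x by (intro integrable_diff Q'_integrable Q_integrable) auto
  have k: "0 < (1 - \<alpha>) / g"
    using g(1) \<alpha>_less_1 by simp
  show ?thesis
  proof (rule backward_gronwall_eq_0[OF cont _ H_thi _ integrable bound k])
    show "y \<in> {x..thi} \<Longrightarrow> H y \<le> 0" for y
      using x H_nonpos by auto
    show "x \<le> s \<Longrightarrow> s \<le> t \<Longrightarrow> t \<le> thi \<Longrightarrow> H s - H t = integral {s..t} (\<lambda>z. Q' z - Q z)"
      for s t
      using x H_diff by auto
  qed (use x in auto)
qed

lemma H_eq_0: "x \<in> \<Theta> \<Longrightarrow> H x = 0"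
proof -
  have "closed {y \<in> \<Theta>. H y = 0}"
    by (rule continuous_closed_preimage_constant[OF H_continuous]) simp
  moreover have "{tlo<..thi} \<subseteq> {y \<in> \<Theta>. H y = 0}"
    using H_eq_0_above_tlo by auto
  ultimately have "closure {tlo<..thi} \<subseteq> {y \<in> \<Theta>. H y = 0}"
    by (rule closure_minimal[rotated])
  then show "x \<in> \<Theta> \<Longrightarrow> H x = 0"
    using tlo_less_thi by auto
qed

lemma u'_eq_u: "x \<in> \<Theta> \<Longrightarrow> u' x = u x"
  using H_eq_0 by (simp add: H_def)

lemma IC_transplant: "\<forall>x\<in>\<Theta>. u t + (t - x) * Q' t \<le> u x" if "t \<in> \<Theta>"
  using IC_alloc_Q' that u'_eq_u by (auto simp: IC_alloc_def)

text \<open>Since \<open>u' = u\<close>, a type that mimics \<open>w < t\<close> under \<open>M'\<close> shows \<open>Q' t \<le> Q w\<close>,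
  and \<open>Pn (q w) \<ge> w\<close> for all such \<open>w\<close>.\<close>

lemma type_le_Pn_Q':
  assumes t: "t \<in> \<Theta>" and "tlo < t" "0 < Q' t"
  shows "t \<le> Pn (Q' t)"
proof (rule dense_le_bounded[OF \<open>tlo < t\<close>])
  fix w assume w: "tlo < w" "w < t"
  then have wT: "w \<in> \<Theta>"
    using t by auto
  have "(t - w) * Q' t \<le> u' w - u' t" "u w - u t \<le> (t - w) * Q w"
    using IC_alloc_bounds(2)[OF IC_alloc_Q' wT t] IC_alloc_bounds(3)[OF IC_alloc_Q wT t] w by auto
  then have "(t - w) * Q' t \<le> (t - w) * Q w"
    using u'_eq_u[OF wT] u'_eq_u[OF t] by simp
  then have "Q' t \<le> Q w"
    using w by simp
  then have "0 < Q w"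
    using \<open>0 < Q' t\<close> by simp
  then have "r w = 1"
    by (rule Q_pos_imp[OF wT])
  note qw = allocated_quantity[OF wT this]
  have "Pn (q w) \<le> Pn (Q' t)"
    using inv_demand_le[OF Pn, of "Q' t" "q w"] \<open>Q' t \<le> Q w\<close> \<open>0 < Q' t\<close> qw by simp
  then show "w \<le> Pn (Q' t)"
    using type_le_Pn_q[OF wT \<open>r w = 1\<close>] by simp
qed

lemma transplant_gain_of_Q'_le_Q:
  assumes t: "t \<in> \<Theta>" and "tlo < t" and gain: "W t < W' t" and "Q' t \<le> Q t"
  shows "r t * TS Pn c t (q t) < r' t * TS Pn c t (q' t)"
proof -
  have "r t = 1"
  proof (rule ccontr)
    assume "r t \<noteq> 1"
    note unallocated[OF t this]
    then have "Q' t = 0"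
      using \<open>Q' t \<le> Q t\<close> Q'_nonneg[OF t] by simp
    then have "r' t = 0"
      using mechanism'[OF t] by (auto simp: Q'_def)
    then show False
      using gain \<open>r t = 0\<close> by (simp add: W_def W'_def)
  qed
  define z where "z = q t"
  have z: "0 < z" "z \<le> q_lo" "Q t = z"
    using allocated_quantity[OF t \<open>r t = 1\<close>] Q_less_q_lo[OF t \<open>tlo < t\<close>] by (auto simp: z_def)
  have V\<Delta>_z: "0 \<le> V \<Delta> z"
    using mult_V_le_V[OF \<Delta>_antimono \<Delta>_nonneg[of z], of 0 0] z by simp
  have W: "W t = TS Pn c t z + V \<Delta> z"
    using TS_P_eq[OF \<open>0 < z\<close>] \<open>r t = 1\<close> by (simp add: W_def z_def)
  show ?thesis
  proof (cases "r' t = 0")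
    case True
    then show ?thesis
      using gain W V\<Delta>_z \<open>r t = 1\<close> by (simp add: W'_def z_def)
  next
    case False
    define \<rho> y where "\<rho> = r' t" and "y = q' t"
    have \<rho>: "0 \<le> \<rho>" "\<rho> \<le> 1" and "0 < y"
      using mechanism'[OF t] False by (auto simp: \<rho>_def y_def)
    have "\<rho> * V \<Delta> y \<le> V \<Delta> z"
      using \<open>Q' t \<le> Q t\<close> z \<rho> \<open>0 < y\<close> \<Delta>_nonneg[of z]
      by (intro mult_V_le_V[OF \<Delta>_antimono]) (auto simp: Q'_def \<rho>_def y_def mult.commute)
    moreover have "W' t = \<rho> * TS Pn c t y + \<rho> * V \<Delta> y"
      using TS_P_eq[OF \<open>0 < y\<close>] by (simp add: W'_def \<rho>_def y_def algebra_simps)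
    ultimately show ?thesis
      using gain W \<open>r t = 1\<close> by (simp add: \<rho>_def y_def z_def)
  qed
qed

lemma transplant_gain_of_Q_less_Q':
  assumes t: "t \<in> \<Theta>" and "tlo < t" and "Q t < Q' t"
  obtains a b where "0 < a" "a \<le> 1" "0 < b" "b * a = Q' t"
    "r t * TS Pn c t (q t) < a * TS Pn c t b"
proof -
  define y where "y = Q' t"
  have "0 < y"
    using \<open>Q t < Q' t\<close> Q_nonneg[OF t] by (simp add: y_def)
  have "t \<le> Pn y"
    using type_le_Pn_Q'[OF assms(1,2)] \<open>0 < y\<close> by (simp add: y_def)
  show ?thesis
    using t
  proof (cases rule: deterministic_cases)
    case 1
    obtain b where "y \<le> b" "0 < TS Pn c t b"
      using exists_TS_pos[OF Pn A2_Pn _ \<open>0 < y\<close> \<open>t \<le> Pn y\<close>] t by auto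
    then show ?thesis
      using that[of "y / b" b] \<open>0 < y\<close> 1 by (simp add: y_def)
  next
    case 2
    then have "TS Pn c t (q t) < TS Pn c t y"
      using TS_less_raise_quantity[OF inv_demand_strict_antimono[OF Pn] _ _ \<open>t \<le> Pn y\<close>]
        \<open>Q t < Q' t\<close> by (simp add: y_def)
    then show ?thesis
      using that[of 1 y] \<open>0 < y\<close> 2 by (simp add: y_def)
  qed
qed

lemma inconsistent: False
proof -
  obtain t where t: "t \<in> \<Theta>" and "W t - (1 - \<alpha>) * u t < W' t - (1 - \<alpha>) * u' t"
    by (rule strict_welfare_gain)
  then have gain: "W t < W' t"
    using u'_eq_u by simp
  then have "tlo < t"
    using t W'_le_W_tlo by (cases "t = tlo") auto
  obtain a b where ab: "0 \<le> a" "a \<le> 1" "0 \<le> b" "b = 0 \<longleftrightarrow> a = 0" "b * a = Q' t"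
    and "r t * TS Pn c t (q t) < a * TS Pn c t b"
  proof (cases "Q' t \<le> Q t")
    case True
    then show ?thesis
      using that[of "r' t" "q' t"] transplant_gain_of_Q'_le_Q[OF t \<open>tlo < t\<close> gain]
        mechanism'[OF t] by (simp add: Q'_def)
  next
    case False
    obtain a b where "0 < a" "a \<le> 1" "0 < b" "b * a = Q' t"
      "r t * TS Pn c t (q t) < a * TS Pn c t b"
      by (rule transplant_gain_of_Q_less_Q'[OF t \<open>tlo < t\<close>]) (use False in simp)
    then show ?thesis
      using that[of a b] by simp
  qed
  then have "dominates Pn c \<alpha> \<Theta> (r(t := a), q(t := b), u) (r, q, u)"
    using IC_transplant[OF t] by (intro dominates_fun_upd[OF admissible t]) auto
  then show False
    using not_dominated by blast
qed

end

lemma (in undominated_deterministic) undominated_P: "undominated P c \<alpha> \<Theta> (r, q, u)"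
proof -
  have "\<not> dominates P c \<alpha> \<Theta> (r', q', u') (r, q, u)" for r' q' u'
  proof
    assume "dominates P c \<alpha> \<Theta> (r', q', u') (r, q, u)"
    then interpret dominated_under_P P Pn c \<alpha> tlo thi r q u r' q' u'
      by unfold_locales
    show False
      by (rule inconsistent)
  qed
  then show ?thesis
    using admissible by (auto simp: undominated_def)
qed

theorem proposition5:
  fixes P Pn :: "real \<Rightarrow> real" and c \<alpha> tlo thi :: real
  assumes "0 < tlo" and "tlo < thi" and "c > 0"
    and "0 \<le> \<alpha>" and "\<alpha> < 1"
    and "inv_demand P" and "inv_demand Pn"
    and "A2 P c thi" and "A2 Pn c thi"
    and "\<And>q q'. 0 \<le> q' \<Longrightarrow> q' < q \<Longrightarrow> P q - Pn q < P q' - Pn q'"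
    and "Pn (Pinv P tlo) = tlo"
  shows "Dset Pn c \<alpha> {tlo..thi} \<subseteq> Dset P c \<alpha> {tlo..thi}"
proof
  fix M assume "M \<in> Dset Pn c \<alpha> {tlo..thi}"
  moreover obtain r q u where M: "M = (r, q, u)"
    by (cases M)
  ultimately interpret undominated_deterministic P Pn c \<alpha> tlo thi r q u
    using assms by unfold_locales (auto simp: Dset_def)
  show "M \<in> Dset P c \<alpha> {tlo..thi}"
    using deterministic undominated_P by (simp add: Dset_def M)
qed

end
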